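(* Let $\sigma>0$ and let $f$ be $(\sigma',2)$-Gevrey regular on $[0,1]$ for some $\sigma'>\sigma$. Then the multiplication map $X^\sigma\to Y^\sigma$, $u\mapsto fu$, is compact.
   Context: Let $I=(0,1)$. A function $u\in C^\infty(\overline I)$ is $(\sigma,k)$-Gevrey regular ($\sigma,k>0$) if there is $C>0$ with $\sup_{x\in I}|u^{(n)}(x)|\le C\sigma^{-n}(n!)^k$ for all $n\ge0$. For $\sigma>0$, $u\in C^\infty(\overline I)$, integers $0\le N\le M$, $k\in\{0,1,2\}$, $l\in\{0,1\}$, set $|u|^{N,M}_{\sigma,k,l}=\big(\sum_{n=N}^M\frac{\sigma^{2n}}{n!^2(n+1)!^2}n^{k+l}\int_0^1(x/\sigma)^k|\partial_x^nu|^2dx\big)^{1/2}$ (with $0^0:=1$), $|u|^N_{\sigma,k,l}$ the same with $M=\infty$; $\|u\|_{\sigma,0,0}=|u|^0_{\sigma,0,0}$. Boundary seminorms: $[u]^{N,M}_\sigma=(\sum_{n=N}^M\frac{\sigma^{2n+1}}{n!^2(n+1)!^2}|u^{(n)}(0)|^2)^{1/2}$, $[u]^N_\sigma$ the same with $M=\infty$. $X^\sigma=\{u\in C^\infty(\overline I):u(1)=0,\ \|\partial_xu\|_{\sigma,0,0}+|\partial_xu|^0_{\sigma,1,0}+|\partial_xu|^0_{\sigma,2,0}+[\partial_xu]^0_\sigma<\infty\}$ and $Y^\sigma=\{u\in C^\infty(\overline I):\|u\|_{\sigma,0,0}+|u|^0_{\sigma,1,0}+[u]^0_\sigma<\infty\}$,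 Hilbert spaces with norms $\|u\|_{X^\sigma}=(\|\partial_xu\|_{\sigma,0,0}^2+(|\partial_xu|^0_{\sigma,1,0})^2+(|\partial_xu|^0_{\sigma,2,0})^2+([\partial_xu]^0_\sigma)^2)^{1/2}$, $\|u\|_{Y^\sigma}=(\|u\|_{\sigma,0,0}^2+(|u|^0_{\sigma,1,0})^2+([u]^0_\sigma)^2)^{1/2}$. *)

theory Defs
  imports "HOL-Analysis.Analysis"
begin

definition is_deriv_seq :: "(real \<Rightarrow> real) \<Rightarrow> (nat \<Rightarrow> real \<Rightarrow> real) \<Rightarrow> bool" where
  "is_deriv_seq u D \<longleftrightarrow> (\<forall>x\<in>{0..1}. D 0 x = u x) \<and>
     (\<forall>n. \<forall>x\<in>{0..1}. (D n has_real_derivative D (Suc n) x) (at x within {0..1}))"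

definition smooth01 :: "(real \<Rightarrow> real) \<Rightarrow> bool" where
  "smooth01 u \<longleftrightarrow> (\<exists>D. is_deriv_seq u D)"

text \<open>The n-th derivative u^(n) on [0,1] (uniquely determined there).\<close>
definition dn :: "(real \<Rightarrow> real) \<Rightarrow> nat \<Rightarrow> real \<Rightarrow> real" where
  "dn u n = (SOME D. is_deriv_seq u D) n"

definition dx :: "(real \<Rightarrow> real) \<Rightarrow> real \<Rightarrow> real" where
  "dx u = dn u 1"

definition gevrey :: "real \<Rightarrow> real \<Rightarrow> (real \<Rightarrow> real) \<Rightarrow> bool" where
  "gevrey \<sigma> k u \<longleftrightarrow> smooth01 u \<and>
     (\<exists>C>0. \<forall>n. \<forall>x\<in>{0<..<1}. \<bar>dn u n x\<bar> \<le> C * \<sigma> powr (- real n) * (fact n) powr k)"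

definition gterm :: "real \<Rightarrow> nat \<Rightarrow> nat \<Rightarrow> (real \<Rightarrow> real) \<Rightarrow> nat \<Rightarrow> real" where
  "gterm \<sigma> k l u n = \<sigma> ^ (2*n) / ((fact n)^2 * (fact (n+1))^2) * real n ^ (k+l) *
      integral {0..1} (\<lambda>x. (x/\<sigma>) ^ k * (dn u n x)^2)"

definition bterm :: "real \<Rightarrow> (real \<Rightarrow> real) \<Rightarrow> nat \<Rightarrow> real" where
  "bterm \<sigma> u n = \<sigma> ^ (2*n+1) / ((fact n)^2 * (fact (n+1))^2) * (dn u n 0)^2"

definition Xspace :: "real \<Rightarrow> (real \<Rightarrow> real) set" where
  "Xspace \<sigma> = {u. smooth01 u \<and> u 1 = 0 \<and>
     summable (gterm \<sigma> 0 0 (dx u)) \<and> summable (gterm \<sigma> 1 0 (dx u)) \<and>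
     summable (gterm \<sigma> 2 0 (dx u)) \<and> summable (bterm \<sigma> (dx u))}"

definition Xnorm :: "real \<Rightarrow> (real \<Rightarrow> real) \<Rightarrow> real" where
  "Xnorm \<sigma> u = sqrt (suminf (gterm \<sigma> 0 0 (dx u)) + suminf (gterm \<sigma> 1 0 (dx u)) +
     suminf (gterm \<sigma> 2 0 (dx u)) + suminf (bterm \<sigma> (dx u)))"

definition Yspace :: "real \<Rightarrow> (real \<Rightarrow> real) set" where
  "Yspace \<sigma> = {u. smooth01 u \<and>
     summable (gterm \<sigma> 0 0 u) \<and> summable (gterm \<sigma> 1 0 u) \<and> summable (bterm \<sigma> u)}"

definition Ynorm :: "real \<Rightarrow> (real \<Rightarrow> real) \<Rightarrow> real" where
  "Ynorm \<sigma> u = sqrt (suminf (gterm \<sigma> 0 0 u) + suminf (gterm \<sigma> 1 0 u) + suminf (bterm \<sigma> u))"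

text \<open>A map T : X^\<sigma> \<rightarrow> Y^\<sigma> is compact: it maps X^\<sigma> into Y^\<sigma>, and every bounded sequence in
  X^\<sigma> has a subsequence whose image converges in Y^\<sigma> (i.e. bounded sets have relatively
  compact images).\<close>
definition compact_XY :: "real \<Rightarrow> ((real \<Rightarrow> real) \<Rightarrow> (real \<Rightarrow> real)) \<Rightarrow> bool" where
  "compact_XY \<sigma> T \<longleftrightarrow> (\<forall>u\<in>Xspace \<sigma>. T u \<in> Yspace \<sigma>) \<and>
     (\<forall>(u::nat \<Rightarrow> real \<Rightarrow> real) B. (\<forall>n. u n \<in> Xspace \<sigma> \<and> Xnorm \<sigma> (u n) \<le> B) \<longrightarrow>
        (\<exists>r v. strict_mono r \<and> v \<in> Yspace \<sigma> \<and>
           (\<lambda>j. Ynorm \<sigma> (\<lambda>x. T (u (r j)) x - v x)) \<longlonglongrightarrow> 0))"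

end

theory Submission
  imports Defs "HOL-Complex_Analysis.Great_Picard"
begin

text \<open>
  By Leibniz's rule and the Gevrey bound \<open>|f^(j)| \<le> C (j!)^2 / \<sigma>'^j\<close>, the \<open>n\<close>-th summand of
  the \<open>Y\<^sup>\<sigma>\<close>-norm of \<open>f u\<close> is bounded, uniformly for \<open>u\<close> in a ball of \<open>X\<^sup>\<sigma>\<close>, by the \<open>n\<close>-th
  term of a summable sequence: the weights turn the binomial coefficients into a factor
  \<open>O(n^-2)\<close>, and \<open>\<sigma> < \<sigma>'\<close> supplies the geometric factor \<open>(\<sigma>/\<sigma>')^(2j)\<close>.
  On a ball of \<open>X\<^sup>\<sigma>\<close> every derivative is uniformly bounded and Lipschitz on \<open>[0,1]\<close>, so the
  Arzela-Ascoli theorem and a diagonal argument give a subsequence all of whose derivatives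
  converge uniformly. Each summand of the \<open>Y\<^sup>\<sigma>\<close>-norm of \<open>f (u\<^sub>k - u)\<close> then tends to \<open>0\<close>,
  and the summable domination lets Tannery's theorem pass to the limit in the series.
\<close>

section \<open>Derivatives on the closed unit interval\<close>

lemma has_real_derivative_unique_01:
  assumes "x \<in> {0..1::real}"
    and "(g has_real_derivative a) (at x within {0..1})"
    and "(g has_real_derivative b) (at x within {0..1})"
  shows "a = b"
  using vector_derivative_unique_within_closed_interval[of 0 1 x g a b] assms
  by (simp add: has_real_derivative_iff_has_vector_derivative)

lemma is_deriv_seq_dn: "smooth01 u \<Longrightarrow> is_deriv_seq u (dn u)"
proof -
  have "dn u = (SOME D. is_deriv_seq u D)" by (rule ext) (simp add: dn_def)
  then show "smooth01 u \<Longrightarrow> is_deriv_seq u (dn u)" unfolding smooth01_def by (metis someI_ex)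
qed

lemma smooth01_deriv_seqI: "is_deriv_seq u D \<Longrightarrow> smooth01 u"
  unfolding smooth01_def by blast

lemma dn_eq_deriv_seq:
  assumes D: "is_deriv_seq u D" and x: "x \<in> {0..1}"
  shows "dn u n x = D n x"
  using x
proof (induction n arbitrary: x)
  case 0
  then show ?case using D is_deriv_seq_dn[OF smooth01_deriv_seqI[OF D]] unfolding is_deriv_seq_def by simp
next
  case (Suc n)
  have "(dn u n has_real_derivative dn u (Suc n) x) (at x within {0..1})"
    using is_deriv_seq_dn[OF smooth01_deriv_seqI[OF D]] Suc.prems unfolding is_deriv_seq_def by blast
  moreover have "(dn u n has_real_derivative D (Suc n) x) (at x within {0..1})"
    unfolding has_field_derivative_def
    by (rule has_derivative_transform[OF Suc.prems _ D[unfolded is_deriv_seq_def, THEN conjunct2,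
          rule_format, OF Suc.prems, unfolded has_field_derivative_def]]) (use Suc.IH in blast)
  ultimately show ?case using has_real_derivative_unique_01 Suc.prems by blast
qed

lemma dn_has_derivative:
  "smooth01 u \<Longrightarrow> x \<in> {0..1} \<Longrightarrow> (dn u n has_real_derivative dn u (Suc n) x) (at x within {0..1})"
  using is_deriv_seq_dn unfolding is_deriv_seq_def by blast

lemma dn_0_eq: "smooth01 u \<Longrightarrow> x \<in> {0..1} \<Longrightarrow> dn u 0 x = u x"
  using is_deriv_seq_dn unfolding is_deriv_seq_def by blast

lemma continuous_on_dn: "smooth01 u \<Longrightarrow> continuous_on {0..1} (dn u n)"
  unfolding continuous_on_eq_continuous_within using dn_has_derivative DERIV_continuous by blast

lemma dn_has_integral:
  assumes u: "smooth01 u" and ab: "0 \<le> a" "a \<le> b" "b \<le> 1"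
  shows "(dn u (Suc n) has_integral dn u n b - dn u n a) {a..b}"
proof (rule fundamental_theorem_of_calculus[OF ab(2)])
  fix x assume x: "x \<in> {a..b}"
  then have "x \<in> {0..1}" using ab by auto
  from dn_has_derivative[OF u this, of n]
  have "(dn u n has_real_derivative dn u (Suc n) x) (at x within {a..b})"
    by (rule DERIV_subset) (use ab in auto)
  then show "(dn u n has_vector_derivative dn u (Suc n) x) (at x within {a..b})"
    by (simp add: has_real_derivative_iff_has_vector_derivative)
qed

lemma is_deriv_seq_dx: "smooth01 u \<Longrightarrow> is_deriv_seq (dx u) (\<lambda>n. dn u (Suc n))"
  unfolding is_deriv_seq_def dx_def using dn_has_derivative by simp

lemma smooth01_dx: "smooth01 u \<Longrightarrow> smooth01 (dx u)"
  using is_deriv_seq_dx smooth01_deriv_seqI by blast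

lemma dn_dx: "smooth01 u \<Longrightarrow> x \<in> {0..1} \<Longrightarrow> dn (dx u) n x = dn u (Suc n) x"
  using is_deriv_seq_dx dn_eq_deriv_seq by blast

lemma is_deriv_seq_diff:
  assumes "smooth01 u" "smooth01 v"
  shows "is_deriv_seq (\<lambda>x. u x - v x) (\<lambda>n x. dn u n x - dn v n x)"
  unfolding is_deriv_seq_def
  using DERIV_diff[OF dn_has_derivative[OF assms(1)] dn_has_derivative[OF assms(2)]]
    dn_0_eq[OF assms(1)] dn_0_eq[OF assms(2)]
  by simp

lemma smooth01_diff: "smooth01 u \<Longrightarrow> smooth01 v \<Longrightarrow> smooth01 (\<lambda>x. u x - v x)"
  using is_deriv_seq_diff smooth01_deriv_seqI by blast

lemma dn_diff:
  "smooth01 u \<Longrightarrow> smooth01 v \<Longrightarrow> x \<in> {0..1} \<Longrightarrow> dn (\<lambda>x. u x - v x) n x = dn u n x - dn v n x"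
  using is_deriv_seq_diff dn_eq_deriv_seq by blast

definition leibniz :: "(nat \<Rightarrow> real \<Rightarrow> real) \<Rightarrow> (nat \<Rightarrow> real \<Rightarrow> real) \<Rightarrow> nat \<Rightarrow> real \<Rightarrow> real" where
  "leibniz F G n x = (\<Sum>i = 0..n. real (n choose i) * F i x * G (n - i) x)"

lemma leibniz_sum_Suc:
  fixes a b :: "nat \<Rightarrow> real"
  shows "(\<Sum>i = 0..n. real (n choose i) * (a (Suc i) * b (n - i) + b (Suc (n - i)) * a i)) =
         (\<Sum>i = 0..Suc n. real (Suc n choose i) * a i * b (Suc n - i))"
proof -
  define S where "S c = (\<Sum>i = 0..n. real (n choose c i) * a (Suc i) * b (n - i))" for c :: "nat \<Rightarrow> nat"
  have Pascal: "(\<Sum>i = 0..Suc n. real (Suc n choose i) * a i * b (Suc n - i)) =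
      a 0 * b (Suc n) + S id + S Suc"
    unfolding S_def
    by (subst sum.atLeast0_atMost_Suc_shift)
       (simp add: binomial_Suc_Suc distrib_right sum.distrib)
  have shift: "(\<Sum>i = 0..n. real (n choose i) * a i * b (Suc n - i)) = a 0 * b (Suc n) + S Suc"
  proof -
    have "(\<Sum>i = 0..n. real (n choose i) * a i * b (Suc n - i)) =
        (\<Sum>i = 0..Suc n. real (n choose i) * a i * b (Suc n - i))"
      by (simp add: sum.atLeast0_atMost_Suc)
    also have "\<dots> = a 0 * b (Suc n) + S Suc"
      unfolding S_def by (subst sum.atLeast0_atMost_Suc_shift) simp
    finally show ?thesis .
  qed
  have "(\<Sum>i = 0..n. real (n choose i) * (a (Suc i) * b (n - i) + b (Suc (n - i)) * a i)) =
      S id + (\<Sum>i = 0..n. real (n choose i) * a i * b (Suc n - i))"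
    unfolding S_def by (auto simp: algebra_simps sum.distrib Suc_diff_le intro!: sum.cong)
  then show ?thesis using Pascal shift by simp
qed

lemma leibniz_has_derivative:
  assumes F: "\<And>n x. x \<in> {0..1} \<Longrightarrow> (F n has_real_derivative F (Suc n) x) (at x within {0..1})"
    and G: "\<And>n x. x \<in> {0..1} \<Longrightarrow> (G n has_real_derivative G (Suc n) x) (at x within {0..1})"
    and x: "x \<in> {0..1}"
  shows "(leibniz F G n has_real_derivative leibniz F G (Suc n) x) (at x within {0..1})"
proof -
  have "((\<lambda>y. real (n choose i) * F i y * G (n - i) y) has_real_derivative
      real (n choose i) * (F (Suc i) x * G (n - i) x + G (Suc (n - i)) x * F i x)) (at x within {0..1})" for i
    using DERIV_cmult[OF DERIV_mult[OF F[OF x] G[OF x]], of "real (n choose i)"]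
    by (simp add: mult.assoc)
  then have "(leibniz F G n has_real_derivative
      (\<Sum>i = 0..n. real (n choose i) * (F (Suc i) x * G (n - i) x + G (Suc (n - i)) x * F i x)))
      (at x within {0..1})"
    unfolding leibniz_def by (intro DERIV_sum) auto
  then show ?thesis
    unfolding leibniz_def leibniz_sum_Suc[of n "\<lambda>i. F i x" "\<lambda>i. G i x"] .
qed

lemma is_deriv_seq_mult:
  "smooth01 f \<Longrightarrow> smooth01 u \<Longrightarrow> is_deriv_seq (\<lambda>x. f x * u x) (leibniz (dn f) (dn u))"
  unfolding is_deriv_seq_def
  using leibniz_has_derivative[of "dn f" "dn u", OF dn_has_derivative dn_has_derivative] dn_0_eq
  by (simp add: leibniz_def)

lemma smooth01_mult: "smooth01 f \<Longrightarrow> smooth01 u \<Longrightarrow> smooth01 (\<lambda>x. f x * u x)"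
  using is_deriv_seq_mult smooth01_deriv_seqI by blast

lemma dn_mult:
  "smooth01 f \<Longrightarrow> smooth01 u \<Longrightarrow> x \<in> {0..1} \<Longrightarrow> dn (\<lambda>x. f x * u x) n x = leibniz (dn f) (dn u) n x"
  using is_deriv_seq_mult dn_eq_deriv_seq by blast

lemma gevrey_dn_bound:
  assumes f: "gevrey \<sigma>' 2 f" and \<sigma>': "\<sigma>' > 0"
  obtains C where "smooth01 f" and "\<And>n x. x \<in> {0..1} \<Longrightarrow> \<bar>dn f n x\<bar> \<le> C * (fact n)^2 / \<sigma>'^n"
proof -
  obtain C where sf: "smooth01 f"
    and open_bound: "\<And>n x. x \<in> {0<..<1} \<Longrightarrow> \<bar>dn f n x\<bar> \<le> C * \<sigma>' powr (- real n) * (fact n) powr 2"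
    using f unfolding gevrey_def by blast
  have "C * \<sigma>' powr (- real n) * (fact n) powr 2 = C * (fact n)^2 / \<sigma>'^n" for n
    using \<sigma>' by (simp add: powr_minus powr_realpow divide_inverse)
  then have "\<bar>dn f n x\<bar> \<le> C * (fact n)^2 / \<sigma>'^n" if "x \<in> {0..1}" for n x
    using continuous_le_on_closure[of "{0<..<1::real}" "\<lambda>x. \<bar>dn f n x\<bar>"] that open_bound
      continuous_on_rabs[OF continuous_on_dn[OF sf]]
    by simp
  with sf that show ?thesis by blast
qed

section \<open>Weights and summands of the norms\<close>

definition weight :: "real \<Rightarrow> nat \<Rightarrow> real" where
  "weight \<sigma> n = \<sigma> ^ (2*n) / ((fact n)^2 * (fact (n+1))^2)"

lemma weight_pos: "\<sigma> > 0 \<Longrightarrow> weight \<sigma> n > 0"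
  unfolding weight_def by simp

lemma weight_0 [simp]: "weight \<sigma> 0 = 1"
  unfolding weight_def by simp

lemma gterm_0_0: "gterm \<sigma> 0 0 u n = weight \<sigma> n * integral {0..1} (\<lambda>x. (dn u n x)^2)"
  unfolding gterm_def weight_def by simp

lemma gterm_1_0: "gterm \<sigma> 1 0 u n = weight \<sigma> n * real n * integral {0..1} (\<lambda>x. (x/\<sigma>) * (dn u n x)^2)"
  unfolding gterm_def weight_def by simp

lemma bterm_eq_weight: "bterm \<sigma> u n = \<sigma> * weight \<sigma> n * (dn u n 0)^2"
  unfolding bterm_def weight_def by (simp add: power_add)

lemma gterm_nonneg:
  assumes "\<sigma> > 0" "smooth01 u"
  shows "0 \<le> gterm \<sigma> k l u n"
proof -
  have "0 \<le> integral {0..1} (\<lambda>x. (x/\<sigma>) ^ k * (dn u n x)^2)"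
    using assms
    by (intro integral_nonneg integrable_continuous_real continuous_intros continuous_on_dn) auto
  then show ?thesis unfolding gterm_def by simp
qed

lemma bterm_nonneg: "\<sigma> > 0 \<Longrightarrow> 0 \<le> bterm \<sigma> u n"
  unfolding bterm_def by simp

lemma integral_weighted_sq_le:
  fixes g :: "real \<Rightarrow> real"
  assumes g: "continuous_on {0..1} g" and \<sigma>: "\<sigma> > 0"
  shows "integral {0..1} (\<lambda>x. (x/\<sigma>) * (g x)^2) \<le> (1/\<sigma>) * integral {0..1} (\<lambda>x. (g x)^2)"
proof -
  have "integral {0..1} (\<lambda>x. (x/\<sigma>) * (g x)^2) \<le> integral {0..1} (\<lambda>x. (1/\<sigma>) * (g x)^2)"
    using \<sigma> by (intro integral_le integrable_continuous_real continuous_intros g)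
      (auto intro!: divide_right_mono mult_left_le_one_le)
  then show ?thesis by simp
qed

definition Ysummand :: "real \<Rightarrow> (real \<Rightarrow> real) \<Rightarrow> nat \<Rightarrow> real" where
  "Ysummand \<sigma> v n = gterm \<sigma> 0 0 v n + gterm \<sigma> 1 0 v n + bterm \<sigma> v n"

lemma Ysummand_nonneg: "\<sigma> > 0 \<Longrightarrow> smooth01 v \<Longrightarrow> 0 \<le> Ysummand \<sigma> v n"
  unfolding Ysummand_def using gterm_nonneg bterm_nonneg by (metis add_nonneg_nonneg)

lemma Ysummand_le:
  assumes \<sigma>: "\<sigma> > 0" and v: "smooth01 v"
    and I: "integral {0..1} (\<lambda>x. (dn v n x)^2) \<le> Q" and D: "(dn v n 0)^2 \<le> Q"
  shows "Ysummand \<sigma> v n \<le> (1 + real n / \<sigma> + \<sigma>) * weight \<sigma> n * Q"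
proof -
  have w: "weight \<sigma> n > 0" using weight_pos[OF \<sigma>] .
  have "integral {0..1} (\<lambda>x. (x/\<sigma>) * (dn v n x)^2) \<le> (1/\<sigma>) * integral {0..1} (\<lambda>x. (dn v n x)^2)"
    by (rule integral_weighted_sq_le[OF continuous_on_dn[OF v] \<sigma>])
  also have "\<dots> \<le> (1/\<sigma>) * Q" using I \<sigma> by (intro mult_left_mono) auto
  finally have "integral {0..1} (\<lambda>x. (x/\<sigma>) * (dn v n x)^2) \<le> (1/\<sigma>) * Q" .
  then have "gterm \<sigma> 1 0 v n \<le> weight \<sigma> n * real n * ((1/\<sigma>) * Q)"
    unfolding gterm_1_0 using w by (intro mult_left_mono) auto
  moreover have "gterm \<sigma> 0 0 v n \<le> weight \<sigma> n * Q"
    unfolding gterm_0_0 using I w by (intro mult_left_mono) auto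
  moreover have "bterm \<sigma> v n \<le> \<sigma> * weight \<sigma> n * Q"
    unfolding bterm_eq_weight using D w \<sigma> by (intro mult_left_mono) auto
  ultimately show ?thesis
    unfolding Ysummand_def by (simp add: algebra_simps)
qed

lemma YspaceI:
  assumes \<sigma>: "\<sigma> > 0" and v: "smooth01 v" and S: "summable (Ysummand \<sigma> v)"
  shows "v \<in> Yspace \<sigma>"
proof -
  have "summable (gterm \<sigma> 0 0 v)" "summable (gterm \<sigma> 1 0 v)" "summable (bterm \<sigma> v)"
    using gterm_nonneg[OF \<sigma> v] bterm_nonneg[OF \<sigma>]
    by (auto intro!: summable_comparison_test'[OF S, of 0] simp: Ysummand_def)
  then show ?thesis using v unfolding Yspace_def by blast
qed

lemma Ynorm_eq_Ysummand: "v \<in> Yspace \<sigma> \<Longrightarrow> Ynorm \<sigma> v = sqrt (suminf (Ysummand \<sigma> v))"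
  unfolding Yspace_def Ynorm_def Ysummand_def[abs_def]
  by (simp add: suminf_add summable_add)

section \<open>Functions in a ball of \<open>X\<^sup>\<sigma>\<close>\<close>

definition Xbounded :: "real \<Rightarrow> real \<Rightarrow> (real \<Rightarrow> real) \<Rightarrow> bool" where
  "Xbounded \<sigma> K w \<longleftrightarrow> smooth01 w \<and> w 1 = 0 \<and>
     (\<forall>m. weight \<sigma> m * integral {0..1} (\<lambda>x. (dn w (Suc m) x)^2) \<le> K) \<and>
     (\<forall>m. \<sigma> * weight \<sigma> m * (dn w (Suc m) 0)^2 \<le> K)"

lemma Xbounded_nonneg:
  assumes "\<sigma> > 0" and "Xbounded \<sigma> K w"
  shows "0 \<le> K"
proof -
  have "\<sigma> * weight \<sigma> 0 * (dn w (Suc 0) 0)^2 \<le> K" using assms(2) unfolding Xbounded_def by blast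
  moreover have "0 \<le> \<sigma> * weight \<sigma> 0 * (dn w (Suc 0) 0)^2" using assms(1) by simp
  ultimately show ?thesis by linarith
qed

lemma Xbounded_mono: "Xbounded \<sigma> K w \<Longrightarrow> K \<le> K' \<Longrightarrow> Xbounded \<sigma> K' w"
  unfolding Xbounded_def by (meson order_trans)

lemma Xspace_Xbounded:
  assumes \<sigma>: "\<sigma> > 0" and u: "u \<in> Xspace \<sigma>"
  shows "Xbounded \<sigma> ((Xnorm \<sigma> u)^2) u" and "0 \<le> Xnorm \<sigma> u"
proof -
  have su: "smooth01 u" and u1: "u 1 = 0"
    and S: "summable (gterm \<sigma> 0 0 (dx u))" "summable (gterm \<sigma> 1 0 (dx u))"
      "summable (gterm \<sigma> 2 0 (dx u))" "summable (bterm \<sigma> (dx u))"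
    using u unfolding Xspace_def by auto
  have sd: "smooth01 (dx u)" using smooth01_dx[OF su] .
  note nonneg = gterm_nonneg[OF \<sigma> sd] bterm_nonneg[OF \<sigma>]
  have sums_nonneg: "0 \<le> suminf (gterm \<sigma> 0 0 (dx u))" "0 \<le> suminf (gterm \<sigma> 1 0 (dx u))"
    "0 \<le> suminf (gterm \<sigma> 2 0 (dx u))" "0 \<le> suminf (bterm \<sigma> (dx u))"
    using S by (auto intro!: suminf_nonneg nonneg)
  then have Xnorm_sq: "(Xnorm \<sigma> u)^2 = suminf (gterm \<sigma> 0 0 (dx u)) + suminf (gterm \<sigma> 1 0 (dx u)) +
      suminf (gterm \<sigma> 2 0 (dx u)) + suminf (bterm \<sigma> (dx u))"
    unfolding Xnorm_def by simp
  show "0 \<le> Xnorm \<sigma> u" unfolding Xnorm_def using sums_nonneg by simp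
  have "gterm \<sigma> 0 0 (dx u) m \<le> (Xnorm \<sigma> u)^2" "bterm \<sigma> (dx u) m \<le> (Xnorm \<sigma> u)^2" for m
    unfolding Xnorm_sq using sums_nonneg
      sum_le_suminf[OF S(1), of "{m}"] sum_le_suminf[OF S(4), of "{m}"] nonneg
    by (auto intro: add_increasing2 add_increasing)
  moreover have "integral {0..1} (\<lambda>x. (dn (dx u) m x)^2) = integral {0..1} (\<lambda>x. (dn u (Suc m) x)^2)"
    and "dn (dx u) m 0 = dn u (Suc m) 0" for m
    by (auto intro!: integral_cong simp: dn_dx[OF su])
  ultimately show "Xbounded \<sigma> ((Xnorm \<sigma> u)^2) u"
    unfolding Xbounded_def gterm_0_0 bterm_eq_weight using su u1 by simp
qed

lemma abs_le_half_one_plus_sq: "\<bar>y\<bar> \<le> (1 + y^2) / 2" for y :: real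
  using sum_squares_ge_zero[of "\<bar>y\<bar> - 1" 0] by (auto simp: power2_eq_square algebra_simps)

lemma abs_le_half_one_plus: "y^2 \<le> A \<Longrightarrow> \<bar>y\<bar> \<le> (1 + A) / 2" for y A :: real
  using abs_le_half_one_plus_sq[of y] by simp

lemma abs_integral_le_half_one_plus_L2:
  fixes g :: "real \<Rightarrow> real"
  assumes g: "continuous_on {0..1} g" and ab: "0 \<le> a" "a \<le> b" "b \<le> 1"
  shows "\<bar>integral {a..b} g\<bar> \<le> (1 + integral {0..1} (\<lambda>x. (g x)^2)) / 2"
proof -
  have sub: "{a..b} \<subseteq> {0..1}" using ab by auto
  have gab: "continuous_on {a..b} g" using continuous_on_subset[OF g sub] .
  have "norm (integral {a..b} g) \<le> integral {a..b} (\<lambda>x. (1 + (g x)^2) / 2)"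
    using abs_le_half_one_plus_sq
    by (intro integral_norm_bound_integral integrable_continuous_real continuous_intros gab) auto
  also have "\<dots> \<le> integral {0..1} (\<lambda>x. (1 + (g x)^2) / 2)"
    using sub by (intro integral_subset_le integrable_continuous_real continuous_intros g gab)
      (auto intro: add_nonneg_nonneg)
  also have "\<dots> = (1 + integral {0..1} (\<lambda>x. (g x)^2)) / 2"
  proof -
    have "integral {0..1} (\<lambda>x. 1 + (g x)^2) = 1 + integral {0..1} (\<lambda>x. (g x)^2)"
      by (subst integral_add) (auto intro!: integrable_continuous_real continuous_intros g)
    then show ?thesis by simp
  qed
  finally show ?thesis by simp
qed

text \<open>Since \<open>w 1 = 0\<close>, the bound for \<open>m = 0\<close> comes from integrating \<open>w'\<close> over \<open>[x,1]\<close>;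
  for \<open>m > 0\<close> one integrates \<open>w^(m+1)\<close> over \<open>[0,x]\<close> and uses the boundary summand.\<close>

definition sup_bound :: "real \<Rightarrow> real \<Rightarrow> nat \<Rightarrow> real" where
  "sup_bound \<sigma> K m = (if m = 0 then (1 + K) / 2
     else (1 + K / (\<sigma> * weight \<sigma> (m - 1))) / 2 + (1 + K / weight \<sigma> m) / 2)"

lemma Xbounded_abs_dn_le:
  assumes \<sigma>: "\<sigma> > 0" and w: "Xbounded \<sigma> K w" and x: "x \<in> {0..1}"
  shows "\<bar>dn w m x\<bar> \<le> sup_bound \<sigma> K m"
proof -
  have sw: "smooth01 w" and w1: "w 1 = 0"
    and L2: "\<And>m. weight \<sigma> m * integral {0..1} (\<lambda>x. (dn w (Suc m) x)^2) \<le> K"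
    and bdry: "\<And>m. \<sigma> * weight \<sigma> m * (dn w (Suc m) 0)^2 \<le> K"
    using w unfolding Xbounded_def by auto
  have L2': "integral {0..1} (\<lambda>x. (dn w (Suc k) x)^2) \<le> K / weight \<sigma> k" for k
    using L2[of k] weight_pos[OF \<sigma>, of k] by (simp add: pos_le_divide_eq mult.commute)
  show ?thesis
  proof (cases m)
    case 0
    have "(dn w (Suc 0) has_integral (dn w 0 1 - dn w 0 x)) {x..1}"
      using dn_has_integral[OF sw] x by auto
    then have "dn w 0 x = - integral {x..1} (dn w (Suc 0))"
      using dn_0_eq[OF sw, of 1] w1 by (simp add: integral_unique)
    then show ?thesis
      using abs_integral_le_half_one_plus_L2[OF continuous_on_dn[OF sw], of x 1 "Suc 0"] x L2'[of 0] 0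
      by (auto simp: sup_bound_def)
  next
    case (Suc k)
    have "(dn w (Suc (Suc k)) has_integral (dn w (Suc k) x - dn w (Suc k) 0)) {0..x}"
      using dn_has_integral[OF sw] x by auto
    then have split: "dn w (Suc k) x = dn w (Suc k) 0 + integral {0..x} (dn w (Suc (Suc k)))"
      by (simp add: integral_unique)
    have "(dn w (Suc k) 0)^2 \<le> K / (\<sigma> * weight \<sigma> k)"
      using bdry[of k] weight_pos[OF \<sigma>, of k] \<sigma> by (simp add: pos_le_divide_eq mult.commute)
    then have "\<bar>dn w (Suc k) 0\<bar> \<le> (1 + K / (\<sigma> * weight \<sigma> k)) / 2"
      by (rule abs_le_half_one_plus)
    moreover have "\<bar>integral {0..x} (dn w (Suc (Suc k)))\<bar> \<le> (1 + K / weight \<sigma> (Suc k)) / 2"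
      using abs_integral_le_half_one_plus_L2[OF continuous_on_dn[OF sw] order_refl, of x "Suc (Suc k)"]
        x L2'[of "Suc k"] by auto
    moreover have "sup_bound \<sigma> K m = (1 + K / (\<sigma> * weight \<sigma> k)) / 2 + (1 + K / weight \<sigma> (Suc k)) / 2"
      unfolding sup_bound_def Suc by simp
    ultimately show ?thesis
      unfolding split Suc
      using abs_triangle_ineq[of "dn w (Suc k) 0" "integral {0..x} (dn w (Suc (Suc k)))"] by linarith
  qed
qed

lemma Xbounded_dn_lipschitz:
  assumes \<sigma>: "\<sigma> > 0" and w: "Xbounded \<sigma> K w" and x: "x \<in> {0..1}" and y: "y \<in> {0..1}"
  shows "\<bar>dn w m x - dn w m y\<bar> \<le> sup_bound \<sigma> K (Suc m) * \<bar>x - y\<bar>"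
proof -
  have sw: "smooth01 w" using w unfolding Xbounded_def by auto
  have ordered: "\<bar>dn w m b - dn w m a\<bar> \<le> sup_bound \<sigma> K (Suc m) * (b - a)"
    if ab: "a \<in> {0..1}" "b \<in> {0..1}" "a \<le> b" for a b
  proof -
    have "integral {a..b} (dn w (Suc m)) = dn w m b - dn w m a"
      using dn_has_integral[OF sw] ab by (auto intro: integral_unique)
    moreover have "norm (integral {a..b} (dn w (Suc m))) \<le> sup_bound \<sigma> K (Suc m) * (b - a)"
      using ab Xbounded_abs_dn_le[OF \<sigma> w]
      by (intro integral_bound continuous_on_subset[OF continuous_on_dn[OF sw]]) auto
    ultimately show ?thesis by simp
  qed
  show ?thesis
    using ordered[OF y x] ordered[OF x y] by (cases "y \<le> x") (auto simp: abs_minus_commute)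
qed

definition sq_bound :: "real \<Rightarrow> real \<Rightarrow> nat \<Rightarrow> real" where
  "sq_bound \<sigma> K m = (if m = 0 then ((1 + K) / 2)^2 else K * (1 + 1/\<sigma>) / weight \<sigma> (m - 1))"

lemma sq_bound_nonneg: "\<sigma> > 0 \<Longrightarrow> 0 \<le> K \<Longrightarrow> 0 \<le> sq_bound \<sigma> K m"
  unfolding sq_bound_def using weight_pos[of \<sigma> "m - 1"] by simp

lemma Xbounded_dn_sq_le:
  assumes \<sigma>: "\<sigma> > 0" and w: "Xbounded \<sigma> K w"
  shows "integral {0..1} (\<lambda>x. (dn w m x)^2) \<le> sq_bound \<sigma> K m" and "(dn w m 0)^2 \<le> sq_bound \<sigma> K m"
proof -
  have sw: "smooth01 w"
    and L2: "\<And>m. weight \<sigma> m * integral {0..1} (\<lambda>x. (dn w (Suc m) x)^2) \<le> K"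
    and bdry: "\<And>m. \<sigma> * weight \<sigma> m * (dn w (Suc m) 0)^2 \<le> K"
    using w unfolding Xbounded_def by auto
  have K: "0 \<le> K" using Xbounded_nonneg[OF \<sigma> w] .
  have "integral {0..1} (\<lambda>x. (dn w m x)^2) \<le> sq_bound \<sigma> K m \<and> (dn w m 0)^2 \<le> sq_bound \<sigma> K m"
  proof (cases m)
    case 0
    have sq: "(dn w 0 x)^2 \<le> ((1 + K) / 2)^2" if "x \<in> {0..1}" for x
      using Xbounded_abs_dn_le[OF \<sigma> w that, of 0] K
      by (simp add: sup_bound_def abs_le_square_iff[symmetric])
    have "integral {0..1} (\<lambda>x. (dn w 0 x)^2) \<le> integral {0..1} (\<lambda>x::real. ((1 + K) / 2)^2)"
      using sq by (intro integral_le integrable_continuous_real continuous_intros continuous_on_dn[OF sw]) auto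
    then show ?thesis using sq[of 0] 0 by (simp add: sq_bound_def)
  next
    case (Suc k)
    have wk: "weight \<sigma> k > 0" using weight_pos[OF \<sigma>] .
    have "K / weight \<sigma> k \<le> sq_bound \<sigma> K m" "K / weight \<sigma> k * (1/\<sigma>) \<le> sq_bound \<sigma> K m"
      using Suc K \<sigma> wk by (auto simp: sq_bound_def field_simps)
    moreover have "integral {0..1} (\<lambda>x. (dn w m x)^2) \<le> K / weight \<sigma> k"
      using L2[of k] wk Suc by (simp add: pos_le_divide_eq mult.commute)
    moreover have "(dn w m 0)^2 \<le> K / weight \<sigma> k * (1/\<sigma>)"
      using bdry[of k] wk \<sigma> Suc by (simp add: pos_le_divide_eq mult.commute mult.left_commute)
    ultimately show ?thesis by linarith
  qed
  then show "integral {0..1} (\<lambda>x. (dn w m x)^2) \<le> sq_bound \<sigma> K m" "(dn w m 0)^2 \<le> sq_bound \<sigma> K m"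
    by auto
qed

section \<open>The Leibniz estimate for the product\<close>

lemma leibniz_sq_le:
  assumes F: "\<And>j. \<bar>F j x\<bar> \<le> Fb j"
  shows "(leibniz F G n x)^2 \<le> (real n + 1) * (\<Sum>j = 0..n. (real (n choose j))^2 * (Fb j)^2 * (G (n - j) x)^2)"
proof -
  have "(leibniz F G n x)^2 = (\<Sum>j = 0..n. (real (n choose j) * F j x * G (n - j) x) * 1)^2"
    unfolding leibniz_def by simp
  also have "\<dots> \<le> (\<Sum>j = 0..n. (real (n choose j) * F j x * G (n - j) x)^2) * (\<Sum>j = 0..n. 1^2)"
    by (rule Cauchy_Schwarz_ineq_sum)
  also have "\<dots> \<le> (\<Sum>j = 0..n. (real (n choose j))^2 * (Fb j)^2 * (G (n - j) x)^2) * (real n + 1)"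
  proof -
    have "(F j x)^2 \<le> (Fb j)^2" for j
      using F[of j] by (simp add: abs_le_square_iff[symmetric])
    then have "(real (n choose j) * F j x * G (n - j) x)^2 \<le> (real (n choose j))^2 * (Fb j)^2 * (G (n - j) x)^2"
      for j by (simp add: power_mult_distrib mult_left_mono mult_right_mono)
    then show ?thesis by (simp add: sum_mono mult_right_mono add.commute)
  qed
  finally show ?thesis by (simp add: mult.commute)
qed

definition product_majorant :: "real \<Rightarrow> (nat \<Rightarrow> real) \<Rightarrow> real \<Rightarrow> nat \<Rightarrow> real" where
  "product_majorant \<sigma> Fb K n = (1 + real n / \<sigma> + \<sigma>) * (real n + 1) *
     (\<Sum>j = 0..n. weight \<sigma> n * (real (n choose j))^2 * (Fb j)^2 * sq_bound \<sigma> K (n - j))"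

lemma Ysummand_mult_le:
  assumes \<sigma>: "\<sigma> > 0" and f: "smooth01 f" and Fb: "\<And>j x. x \<in> {0..1} \<Longrightarrow> \<bar>dn f j x\<bar> \<le> Fb j"
    and w: "Xbounded \<sigma> K w"
  shows "Ysummand \<sigma> (\<lambda>x. f x * w x) n \<le> product_majorant \<sigma> Fb K n"
proof -
  have sw: "smooth01 w" using w unfolding Xbounded_def by auto
  define R where "R x = (real n + 1) * (\<Sum>j = 0..n. (real (n choose j))^2 * (Fb j)^2 * (dn w (n - j) x)^2)" for x
  define Q where "Q = (real n + 1) * (\<Sum>j = 0..n. (real (n choose j))^2 * (Fb j)^2 * sq_bound \<sigma> K (n - j))"
  have pointwise: "(dn (\<lambda>x. f x * w x) n x)^2 \<le> R x" if x: "x \<in> {0..1}" for x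
    unfolding dn_mult[OF f sw x] R_def using Fb[OF x] by (rule leibniz_sq_le)
  have R_cont: "continuous_on {0..1} R"
    unfolding R_def by (intro continuous_intros continuous_on_dn[OF sw])
  have "integral {0..1} R = (real n + 1) *
      (\<Sum>j = 0..n. (real (n choose j))^2 * (Fb j)^2 * integral {0..1} (\<lambda>x. (dn w (n - j) x)^2))"
    unfolding R_def
    by (subst integral_mult_right, subst integral_sum)
       (auto intro!: integrable_continuous_real continuous_intros continuous_on_dn[OF sw])
  also have "\<dots> \<le> Q"
    unfolding Q_def using Xbounded_dn_sq_le(1)[OF \<sigma> w]
    by (intro mult_left_mono sum_mono) auto
  finally have int_R: "integral {0..1} R \<le> Q" .
  have "integral {0..1} (\<lambda>x. (dn (\<lambda>x. f x * w x) n x)^2) \<le> integral {0..1} R"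
    using pointwise
    by (intro integral_le integrable_continuous_real continuous_intros R_cont
        continuous_on_dn[OF smooth01_mult[OF f sw]]) auto
  with int_R have "integral {0..1} (\<lambda>x. (dn (\<lambda>x. f x * w x) n x)^2) \<le> Q" by linarith
  moreover have "R 0 \<le> Q"
    unfolding R_def Q_def using Xbounded_dn_sq_le(2)[OF \<sigma> w]
    by (intro mult_left_mono sum_mono) auto
  then have "(dn (\<lambda>x. f x * w x) n 0)^2 \<le> Q"
    using pointwise[of 0] by simp
  ultimately have "Ysummand \<sigma> (\<lambda>x. f x * w x) n \<le> (1 + real n / \<sigma> + \<sigma>) * weight \<sigma> n * Q"
    by (rule Ysummand_le[OF \<sigma> smooth01_mult[OF f sw]])
  also have "\<dots> = product_majorant \<sigma> Fb K n"
    unfolding product_majorant_def Q_def by (simp add: sum_distrib_left ac_simps)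
  finally show ?thesis .
qed

section \<open>Summability of the majorant for a Gevrey factor\<close>

lemma majorant_term_eq:
  assumes \<sigma>: "\<sigma> > 0" and \<sigma>': "\<sigma>' > 0" and jn: "j < n"
  shows "weight \<sigma> n * (real (n choose j))^2 * (C * (fact j)^2 / \<sigma>'^j)^2 * sq_bound \<sigma> K (n - j)
    = C^2 * K * (1 + 1/\<sigma>) * \<sigma>^2 * ((\<sigma>/\<sigma>')^2)^j * (fact j * fact (n - j - 1) / fact (n + 1))^2"
proof -
  define k where "k = n - j - 1"
  have nk: "n = j + k + 1" and nj: "n - j = Suc k" using jn unfolding k_def by auto
  have binom: "real (n choose j) = fact n / (fact j * fact (Suc k))"
    using binomial_fact[of j n] jn nj by simp
  have "2 * n = 2 * j + 2 * k + 2" using nk by simp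
  then have weight_n: "weight \<sigma> n = \<sigma>^(2*j) * \<sigma>^(2*k) * \<sigma>^2 / ((fact n)^2 * (fact (n+1))^2)"
    unfolding weight_def by (simp only: power_add)
  have sq_bound_nj: "sq_bound \<sigma> K (n - j) = K * (1 + 1/\<sigma>) / (\<sigma>^(2*k) / ((fact k)^2 * (fact (Suc k))^2))"
    unfolding sq_bound_def nj weight_def by simp
  have q_pow: "((\<sigma>/\<sigma>')^2)^j = \<sigma>^(2*j) / (\<sigma>'^j)^2"
    by (simp add: power_divide power_mult[symmetric] power_mult_distrib mult.commute)
  have field: "S1 * S2 * s^2 / (N^2 * N1^2) * (N / (a * b1))^2 * (C * a^2 / T)^2 * (K * (1 + 1/s) / (S2 / (b^2 * b1^2)))
       = C^2 * K * (1 + 1/s) * s^2 * (S1 / T^2) * (a * b / N1)^2"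
    if "a > 0" "b > 0" "b1 > 0" "N > 0" "N1 > 0" "S1 > 0" "S2 > 0" "T > 0" "s > 0"
    for a b b1 N N1 S1 S2 T s :: real
    using that by (simp add: field_simps power2_eq_square)
  show ?thesis
    unfolding weight_n binom sq_bound_nj q_pow k_def[symmetric]
    by (rule field) (use \<sigma> \<sigma>' in auto)
qed

lemma fact_mult_le_fact_add: "fact j * fact k \<le> (fact (j + k) :: real)"
proof -
  have "fact j * fact k * ((j + k) choose j) = (fact (j + k) :: nat)"
    using binomial_fact_lemma[of j "j + k"] by simp
  moreover have "((j + k) choose j) \<ge> 1" by (simp add: Suc_leI)
  ultimately have "fact j * fact k \<le> (fact (j + k) :: nat)"
    by (metis mult_le_mono2 nat_mult_1_right)
  then show ?thesis by (metis of_nat_fact of_nat_le_iff of_nat_mult)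
qed

lemma fact_ratio_sq_le:
  assumes jn: "j < n"
  shows "(fact j * fact (n - j - 1) / fact (n + 1) :: real)^2 \<le> 1 / (real n * (real n + 1))^2"
proof -
  define k where "k = n - j - 1"
  have nk: "n = Suc (j + k)" using jn unfolding k_def by simp
  have fact_Suc_n: "(fact (n + 1) :: real) = (real n + 1) * real n * fact (j + k)"
    unfolding nk by (simp add: algebra_simps)
  have "fact j * fact k / fact (n + 1) \<le> fact (j + k) / ((real n + 1) * real n * fact (j + k))"
    unfolding fact_Suc_n using jn by (intro divide_right_mono fact_mult_le_fact_add) simp
  also have "\<dots> = 1 / (real n * (real n + 1))" using jn by simp
  finally have "fact j * fact k / fact (n + 1) \<le> (1::real) / (real n * (real n + 1))" .
  then have "(fact j * fact k / fact (n + 1))^2 \<le> (1 / (real n * (real n + 1)))^2"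
    by (intro power_mono) auto
  then show ?thesis
    unfolding k_def[symmetric] by (simp add: power_divide)
qed

lemma majorant_last_term_eq:
  assumes \<sigma>: "\<sigma> > 0" and \<sigma>': "\<sigma>' > 0"
  shows "weight \<sigma> n * (real (n choose n))^2 * (C * (fact n)^2 / \<sigma>'^n)^2 * sq_bound \<sigma> K (n - n)
    = C^2 * ((1 + K) / 2)^2 * ((\<sigma>/\<sigma>')^2)^n / (real n + 1)^2"
proof -
  have q_pow: "((\<sigma>/\<sigma>')^2)^n = \<sigma>^(2*n) / (\<sigma>'^n)^2"
    by (simp add: power_divide power_mult[symmetric] power_mult_distrib mult.commute)
  have field: "S / (N^2 * (M * N)^2) * (C * N^2 / T)^2 * P = C^2 * P * (S / T^2) / M^2"
    if "N > 0" "T > 0" "M > 0" for S N T M P :: real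
    using that by (simp add: field_simps power2_eq_square)
  show ?thesis
    unfolding weight_def q_pow sq_bound_def
    using field[of "fact n" "\<sigma>'^n" "real n + 1"] \<sigma>' by (simp add: algebra_simps)
qed

lemma prefactor_le:
  assumes "\<sigma> > 0"
  shows "(1 + real n / \<sigma> + \<sigma>) * (real n + 1) \<le> (1 + 1/\<sigma> + \<sigma>) * (real n + 1)^2"
proof -
  have "real n / \<sigma> \<le> (real n + 1) / \<sigma>" "1 + \<sigma> \<le> (1 + \<sigma>) * (real n + 1)"
    using assms by (simp_all add: divide_right_mono)
  then have "1 + real n / \<sigma> + \<sigma> \<le> (1 + \<sigma>) * (real n + 1) + (real n + 1) / \<sigma>"
    by linarith
  also have "\<dots> = (1 + 1/\<sigma> + \<sigma>) * (real n + 1)"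
    by (simp add: algebra_simps add_divide_distrib)
  finally show ?thesis
    by (simp add: power2_eq_square mult.assoc[symmetric] mult_right_mono)
qed

lemma majorant_offdiagonal_sum_le:
  assumes \<sigma>: "0 < \<sigma>" and \<sigma>\<sigma>': "\<sigma> < \<sigma>'" and K: "K \<ge> 0"
  defines "q \<equiv> (\<sigma>/\<sigma>')^2"
  shows "(\<Sum>j<n. weight \<sigma> n * (real (n choose j))^2 * (C * (fact j)^2 / \<sigma>'^j)^2 * sq_bound \<sigma> K (n - j))
    \<le> C^2 * K * (1 + 1/\<sigma>) * \<sigma>^2 / (1 - q) / (real n * (real n + 1))^2"
proof -
  have \<sigma>': "\<sigma>' > 0" using \<sigma> \<sigma>\<sigma>' by linarith
  have q: "0 \<le> q" "q < 1" unfolding q_def using \<sigma> \<sigma>\<sigma>' by (auto simp: power_less_one_iff)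
  define A where "A = C^2 * K * (1 + 1/\<sigma>) * \<sigma>^2"
  have A: "A \<ge> 0" unfolding A_def using K \<sigma> by simp
  have "weight \<sigma> n * (real (n choose j))^2 * (C * (fact j)^2 / \<sigma>'^j)^2 * sq_bound \<sigma> K (n - j)
      \<le> A / (real n * (real n + 1))^2 * q^j" if "j < n" for j
    unfolding majorant_term_eq[OF \<sigma> \<sigma>' that] A_def[symmetric] q_def[symmetric]
    using mult_left_mono[OF fact_ratio_sq_le[OF that], of "A * q^j"] A q by (simp add: mult.commute)
  then have "(\<Sum>j<n. weight \<sigma> n * (real (n choose j))^2 * (C * (fact j)^2 / \<sigma>'^j)^2 * sq_bound \<sigma> K (n - j))
      \<le> (\<Sum>j<n. A / (real n * (real n + 1))^2 * q^j)"
    by (rule sum_mono) simp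
  also have "\<dots> = A / (real n * (real n + 1))^2 * (\<Sum>j<n. q^j)"
    by (simp add: sum_distrib_left)
  also have "\<dots> \<le> A / (real n * (real n + 1))^2 * (1 / (1 - q))"
    using sum_le_suminf[OF summable_geometric, of q "{..<n}"] q A
    by (intro mult_left_mono) (auto simp: suminf_geometric)
  finally show ?thesis unfolding A_def by (simp add: ac_simps)
qed

lemma product_majorant_le:
  assumes \<sigma>: "0 < \<sigma>" and \<sigma>\<sigma>': "\<sigma> < \<sigma>'" and K: "K \<ge> 0" and n: "n \<ge> 1"
  defines "q \<equiv> (\<sigma>/\<sigma>')^2"
  shows "product_majorant \<sigma> (\<lambda>j. C * (fact j)^2 / \<sigma>'^j) K n \<le>
     (1 + 1/\<sigma> + \<sigma>) * (C^2 * K * (1 + 1/\<sigma>) * \<sigma>^2 / (1 - q) * inverse ((real n)^2) +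
       C^2 * ((1 + K) / 2)^2 * q^n)"
proof -
  have \<sigma>': "\<sigma>' > 0" using \<sigma> \<sigma>\<sigma>' by linarith
  have q: "0 \<le> q" unfolding q_def by simp
  define t where "t j = weight \<sigma> n * (real (n choose j))^2 * (C * (fact j)^2 / \<sigma>'^j)^2 * sq_bound \<sigma> K (n - j)" for j
  define A where "A = C^2 * K * (1 + 1/\<sigma>) * \<sigma>^2"
  define B where "B = C^2 * ((1 + K) / 2)^2"
  have t_nonneg: "0 \<le> t j" for j
    unfolding t_def using weight_pos[OF \<sigma>, of n] sq_bound_nonneg[OF \<sigma> K] by simp
  have offdiagonal: "(\<Sum>j<n. t j) \<le> A / (1 - q) / (real n * (real n + 1))^2"
    unfolding t_def A_def q_def by (rule majorant_offdiagonal_sum_le[OF \<sigma> \<sigma>\<sigma>' K])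
  have diagonal: "t n = B * q^n / (real n + 1)^2"
    unfolding t_def B_def q_def using majorant_last_term_eq[OF \<sigma> \<sigma>'] by simp
  have "product_majorant \<sigma> (\<lambda>j. C * (fact j)^2 / \<sigma>'^j) K n =
      (1 + real n / \<sigma> + \<sigma>) * (real n + 1) * ((\<Sum>j<n. t j) + t n)"
    unfolding product_majorant_def t_def by (simp add: atLeast0AtMost lessThan_Suc_atMost[symmetric])
  also have "\<dots> \<le> (1 + 1/\<sigma> + \<sigma>) * (real n + 1)^2 *
      (A / (1 - q) / (real n * (real n + 1))^2 + B * q^n / (real n + 1)^2)"
    using offdiagonal diagonal \<sigma> t_nonneg q
    by (intro mult_mono[OF prefactor_le[OF \<sigma>]] add_mono sum_nonneg add_nonneg_nonneg) (auto simp: B_def)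
  also have "\<dots> = (1 + 1/\<sigma> + \<sigma>) * (A / (1 - q) * inverse ((real n)^2) + B * q^n)"
  proof -
    have cancel: "m^2 * (X / (k * m)^2 + Y / m^2) = X * inverse (k^2) + Y" if "m > 0" "k > 0"
      for m k X Y :: real
      using that by (simp add: field_simps)
    have "(real n + 1)^2 * (A / (1 - q) / (real n * (real n + 1))^2 + B * q^n / (real n + 1)^2) =
        A / (1 - q) * inverse ((real n)^2) + B * q^n"
      by (rule cancel) (use n in auto)
    then show ?thesis by (simp only: mult.assoc)
  qed
  finally show ?thesis unfolding A_def B_def .
qed

lemma summable_product_majorant:
  assumes \<sigma>: "0 < \<sigma>" and \<sigma>\<sigma>': "\<sigma> < \<sigma>'" and K: "K \<ge> 0"
  shows "summable (product_majorant \<sigma> (\<lambda>j. C * (fact j)^2 / \<sigma>'^j) K)"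
proof -
  define q where "q = (\<sigma>/\<sigma>')^2"
  have q: "0 \<le> q" "q < 1" unfolding q_def using \<sigma> \<sigma>\<sigma>' by (auto simp: power_less_one_iff)
  have nonneg: "0 \<le> product_majorant \<sigma> (\<lambda>j. C * (fact j)^2 / \<sigma>'^j) K n" for n
    unfolding product_majorant_def using \<sigma> K weight_pos[OF \<sigma>]
    by (intro mult_nonneg_nonneg sum_nonneg) (auto intro: sq_bound_nonneg less_imp_le)
  have "summable (\<lambda>n. (1 + 1/\<sigma> + \<sigma>) * (C^2 * K * (1 + 1/\<sigma>) * \<sigma>^2 / (1 - q) * inverse ((real n)^2) +
      C^2 * ((1 + K) / 2)^2 * q^n))"
    using q by (intro summable_mult summable_add summable_geometric inverse_power_summable) auto
  then show ?thesis
    by (rule summable_comparison_test'[of _ 1])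
      (use nonneg product_majorant_le[OF \<sigma> \<sigma>\<sigma>' K] in \<open>auto simp: q_def\<close>)
qed

lemma Xbounded_mult_Yspace:
  assumes \<sigma>: "0 < \<sigma>" and \<sigma>\<sigma>': "\<sigma> < \<sigma>'" and f: "smooth01 f"
    and Fb: "\<And>j x. x \<in> {0..1} \<Longrightarrow> \<bar>dn f j x\<bar> \<le> C * (fact j)^2 / \<sigma>'^j"
    and w: "Xbounded \<sigma> K w"
  shows "(\<lambda>x. f x * w x) \<in> Yspace \<sigma>"
proof -
  have sv: "smooth01 (\<lambda>x. f x * w x)"
    using smooth01_mult[OF f] w unfolding Xbounded_def by blast
  have "summable (Ysummand \<sigma> (\<lambda>x. f x * w x))"
    using Ysummand_nonneg[OF \<sigma> sv] Ysummand_mult_le[OF \<sigma> f Fb w]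
    by (intro summable_comparison_test'[OF summable_product_majorant[where C = C, OF \<sigma> \<sigma>\<sigma>'
          Xbounded_nonneg[OF \<sigma> w]]]) auto
  then show ?thesis by (rule YspaceI[OF \<sigma> sv])
qed

section \<open>Extraction of a convergent subsequence\<close>

lemma Xbounded_uniform_subseq:
  assumes \<sigma>: "\<sigma> > 0" and u: "\<And>n. Xbounded \<sigma> K (u n)"
  obtains k g where "strict_mono (k :: nat \<Rightarrow> nat)"
    and "uniform_limit {0..1} (\<lambda>n. dn (u (k n)) i) g sequentially"
proof -
  define L where "L = sup_bound \<sigma> K (Suc i)"
  have "\<bar>dn (u 0) (Suc i) 0\<bar> \<le> L" unfolding L_def by (rule Xbounded_abs_dn_le[OF \<sigma> u]) simp
  then have L: "0 \<le> L" by (rule order_trans[OF abs_ge_zero])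
  have equicont: "\<exists>d>0. \<forall>n y. y \<in> {0..1} \<and> norm (x - y) < d \<longrightarrow> norm (dn (u n) i x - dn (u n) i y) < e"
    if x: "x \<in> {0..1}" and e: "0 < e" for x e
  proof (intro exI conjI allI impI)
    show "e / (L + 1) > 0" using e L by simp
    fix n y assume y: "y \<in> {0..1} \<and> norm (x - y) < e / (L + 1)"
    have "\<bar>dn (u n) i x - dn (u n) i y\<bar> \<le> L * \<bar>x - y\<bar>"
      unfolding L_def using Xbounded_dn_lipschitz[OF \<sigma> u x] y by blast
    also have "\<dots> \<le> L * (e / (L + 1))" using y L by (intro mult_left_mono) auto
    also have "\<dots> < e" using e L by (simp add: field_simps)
    finally show "norm (dn (u n) i x - dn (u n) i y) < e" by simp
  qed
  have bounded: "norm (dn (u n) i x) \<le> sup_bound \<sigma> K i" if "x \<in> {0..1}" for n x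
    using Xbounded_abs_dn_le[OF \<sigma> u that] by simp
  obtain g k where k: "strict_mono (k :: nat \<Rightarrow> nat)"
    and conv: "\<And>e. 0 < e \<Longrightarrow> \<exists>N. \<forall>n x. n \<ge> N \<and> x \<in> {0..1} \<longrightarrow> norm (dn (u (k n)) i x - g x) < e"
    using Arzela_Ascoli[OF compact_Icc bounded equicont] by metis
  have "uniform_limit {0..1} (\<lambda>n. dn (u (k n)) i) g sequentially"
    unfolding uniform_limit_sequentially_iff dist_norm using conv by blast
  with k that show ?thesis by blast
qed

lemma Xbounded_diagonal_subseq:
  assumes \<sigma>: "\<sigma> > 0" and u: "\<And>n. Xbounded \<sigma> K (u n)"
  obtains k G where "strict_mono (k :: nat \<Rightarrow> nat)"
    and "\<And>m. uniform_limit {0..1} (\<lambda>n. dn (u (k n)) m) (G m) sequentially"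
proof -
  define P where "P i r \<longleftrightarrow> (\<exists>g. uniform_limit {0..1} (\<lambda>n. dn (u (r n)) i) g sequentially)"
    for i and r :: "nat \<Rightarrow> nat"
  obtain k where k: "strict_mono (k :: nat \<Rightarrow> nat)" "\<And>i. P i (id \<circ> k)"
  proof (rule subsequence_diagonalization_lemma[of P id])
    fix i and r :: "nat \<Rightarrow> nat"
    obtain k g where "strict_mono (k :: nat \<Rightarrow> nat)"
      "uniform_limit {0..1} (\<lambda>n. dn (u (r (k n))) i) g sequentially"
      using Xbounded_uniform_subseq[of \<sigma> K "u \<circ> r" i] \<sigma> u by auto
    then show "\<exists>k. strict_mono (k :: nat \<Rightarrow> nat) \<and> P i (r \<circ> k)" unfolding P_def by auto
  next
    fix i and r k1 k2 :: "nat \<Rightarrow> nat" and N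
    assume "P i (r \<circ> k1)" and tail: "\<And>j. N \<le> j \<Longrightarrow> \<exists>j'. j \<le> j' \<and> k2 j = k1 j'"
    then obtain g where g: "uniform_limit {0..1} (\<lambda>n. dn (u (r (k1 n))) i) g sequentially"
      unfolding P_def by auto
    have "uniform_limit {0..1} (\<lambda>n. dn (u (r (k2 n))) i) g sequentially"
      unfolding uniform_limit_sequentially_iff
    proof (intro allI impI)
      fix e :: real assume "e > 0"
      then obtain M where M: "\<forall>n\<ge>M. \<forall>x\<in>{0..1}. dist (dn (u (r (k1 n))) i x) (g x) < e"
        using g unfolding uniform_limit_sequentially_iff by blast
      have "dist (dn (u (r (k2 n))) i x) (g x) < e" if "max N M \<le> n" "x \<in> {0..1}" for n x
        using tail[of n] M that by (metis max.bounded_iff order_trans)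
      then show "\<exists>M. \<forall>n\<ge>M. \<forall>x\<in>{0..1}. dist (dn (u (r (k2 n))) i x) (g x) < e" by blast
    qed
    then show "P i (r \<circ> k2)" unfolding P_def by auto
  next
    fix k :: "nat \<Rightarrow> nat" assume "strict_mono k" "\<And>i. P i (id \<circ> k)"
    then show thesis by (rule that)
  qed
  then have "\<forall>i. \<exists>g. uniform_limit {0..1} (\<lambda>n. dn (u (k n)) i) g sequentially"
    unfolding P_def by simp
  then obtain G where "\<And>i. uniform_limit {0..1} (\<lambda>n. dn (u (k n)) i) (G i) sequentially"
    by metis
  with k(1) that show ?thesis by blast
qed

lemma is_deriv_seq_uniform_limit:
  assumes v: "\<And>n. smooth01 (v n)"
    and G: "\<And>m. uniform_limit {0..1} (\<lambda>n. dn (v n) m) (G m) sequentially"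
  shows "is_deriv_seq (G 0) G"
  unfolding is_deriv_seq_def
proof (intro conjI allI ballI)
  fix m and x :: real assume x: "x \<in> {0..1}"
  have "\<exists>g. \<forall>x\<in>{0..1}. (\<lambda>n. dn (v n) m x) \<longlonglongrightarrow> g x \<and>
      (g has_derivative (*) (G (Suc m) x)) (at x within {0..1})"
  proof (rule has_derivative_sequence[where S = "{0..1}" and f = "\<lambda>n. dn (v n) m"
        and f' = "\<lambda>n x. (*) (dn (v n) (Suc m) x)" and g' = "\<lambda>x. (*) (G (Suc m) x)"])
    show "convex {0..1::real}" by simp
    show "(dn (v n) m has_derivative (*) (dn (v n) (Suc m) y)) (at y within {0..1})"
      if "y \<in> {0..1}" for n y
      using dn_has_derivative[OF v that] unfolding has_field_derivative_def .
    fix e :: real assume "e > 0"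
    then have "\<forall>\<^sub>F n in sequentially. \<forall>x\<in>{0..1}. \<bar>dn (v n) (Suc m) x - G (Suc m) x\<bar> < e"
      using uniform_limitD[OF G] by (simp add: dist_real_def)
    then show "\<forall>\<^sub>F n in sequentially. \<forall>x\<in>{0..1}. \<forall>h.
        norm (dn (v n) (Suc m) x * h - G (Suc m) x * h) \<le> e * norm h"
      by eventually_elim (auto simp: left_diff_distrib[symmetric] abs_mult intro!: mult_right_mono)
  next
    show "(0::real) \<in> {0..1}" by simp
    show "(\<lambda>n. dn (v n) m 0) \<longlonglongrightarrow> G m 0" by (rule tendsto_uniform_limitI[OF G]) simp
  qed
  then obtain g where g: "\<And>y. y \<in> {0..1} \<Longrightarrow> (\<lambda>n. dn (v n) m y) \<longlonglongrightarrow> g y"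
    "(g has_derivative (*) (G (Suc m) x)) (at x within {0..1})"
    using x by blast
  have "G m y = g y" if "y \<in> {0..1}" for y
    using LIMSEQ_unique[OF tendsto_uniform_limitI[OF G that] g(1)[OF that]] .
  then show "(G m has_real_derivative G (Suc m) x) (at x within {0..1})"
    unfolding has_field_derivative_def by (rule has_derivative_transform[OF x _ g(2)])
qed simp

lemma tendsto_integral_sq_uniform_limit:
  fixes h :: "nat \<Rightarrow> real \<Rightarrow> real"
  assumes h: "uniform_limit {0..1} h g sequentially" and cont: "\<And>n. continuous_on {0..1} (h n)"
  shows "(\<lambda>n. integral {0..1} (\<lambda>x. (h n x)^2)) \<longlonglongrightarrow> integral {0..1} (\<lambda>x. (g x)^2)"
proof -
  have "continuous_on {0..1} g"
    using uniform_limit_theorem[OF _ h] cont by (simp add: always_eventually)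
  then have "bounded (g ` {0..1})"
    by (intro compact_imp_bounded compact_continuous_image) auto
  then have sq: "uniform_limit {0..1} (\<lambda>n x. (h n x)^2) (\<lambda>x. (g x)^2) sequentially"
    using uniform_lim_mult[OF h h] by (simp add: power2_eq_square)
  have "continuous_on {0..1} (\<lambda>x. (h n x)^2)" for n
    by (intro continuous_intros cont)
  then obtain I J where "\<And>n. ((\<lambda>x. (h n x)^2) has_integral I n) {0..1}"
    "((\<lambda>x. (g x)^2) has_integral J) {0..1}" "I \<longlonglongrightarrow> J"
    using uniform_limit_integral[OF sq] by auto
  moreover from this(1,2) have "(\<lambda>n. integral {0..1} (\<lambda>x. (h n x)^2)) = I"
    and "integral {0..1} (\<lambda>x. (g x)^2) = J"
    by (auto intro: integral_unique)
  ultimately show ?thesis by simp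
qed

lemma Xbounded_uniform_limit:
  assumes \<sigma>: "\<sigma> > 0" and v: "\<And>n. Xbounded \<sigma> K (v n)"
    and G: "\<And>m. uniform_limit {0..1} (\<lambda>n. dn (v n) m) (G m) sequentially"
  shows "Xbounded \<sigma> K (G 0)"
proof -
  have sv: "smooth01 (v n)" for n using v unfolding Xbounded_def by auto
  have D: "is_deriv_seq (G 0) G" by (rule is_deriv_seq_uniform_limit[OF sv G])
  have dn_G: "dn (G 0) m x = G m x" if "x \<in> {0..1}" for m x using dn_eq_deriv_seq[OF D that] .
  have "(\<lambda>n. dn (v n) 0 1) \<longlonglongrightarrow> G 0 1" by (rule tendsto_uniform_limitI[OF G]) simp
  moreover have "dn (v n) 0 1 = 0" for n
    using dn_0_eq[OF sv, of 1] v unfolding Xbounded_def by simp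
  ultimately have G1: "G 0 1 = 0" by (simp add: LIMSEQ_const_iff)
  have L2: "weight \<sigma> m * integral {0..1} (\<lambda>x. (G (Suc m) x)^2) \<le> K" for m
  proof (rule tendsto_upperbound)
    show "(\<lambda>n. weight \<sigma> m * integral {0..1} (\<lambda>x. (dn (v n) (Suc m) x)^2)) \<longlonglongrightarrow>
        weight \<sigma> m * integral {0..1} (\<lambda>x. (G (Suc m) x)^2)"
      by (intro tendsto_mult_left tendsto_integral_sq_uniform_limit G continuous_on_dn sv)
  qed (use v in \<open>auto simp: Xbounded_def\<close>)
  have bdry: "\<sigma> * weight \<sigma> m * (G (Suc m) 0)^2 \<le> K" for m
  proof (rule tendsto_upperbound)
    show "(\<lambda>n. \<sigma> * weight \<sigma> m * (dn (v n) (Suc m) 0)^2) \<longlonglongrightarrow> \<sigma> * weight \<sigma> m * (G (Suc m) 0)^2"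
      by (intro tendsto_intros tendsto_uniform_limitI[OF G]) simp
  qed (use v in \<open>auto simp: Xbounded_def\<close>)
  have "integral {0..1} (\<lambda>x. (dn (G 0) (Suc m) x)^2) = integral {0..1} (\<lambda>x. (G (Suc m) x)^2)" for m
    by (rule integral_cong) (simp add: dn_G)
  then show ?thesis
    unfolding Xbounded_def using smooth01_deriv_seqI[OF D] G1 L2 bdry dn_G[of 0] by simp
qed

lemma Xbounded_diff:
  assumes a: "Xbounded \<sigma> K1 a" and b: "Xbounded \<sigma> K2 b" and \<sigma>: "\<sigma> > 0"
  shows "Xbounded \<sigma> (2 * K1 + 2 * K2) (\<lambda>x. a x - b x)"
proof -
  have sa: "smooth01 a" and sb: "smooth01 b" using a b unfolding Xbounded_def by auto
  have sq: "(p - q)^2 \<le> 2 * p^2 + 2 * q^2" for p q :: real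
    using sum_squares_ge_zero[of "p + q" 0] by (simp add: power2_eq_square algebra_simps)
  have wm: "weight \<sigma> m > 0" for m using weight_pos[OF \<sigma>] .
  have L2: "weight \<sigma> m * integral {0..1} (\<lambda>x. (dn (\<lambda>x. a x - b x) (Suc m) x)^2) \<le> 2 * K1 + 2 * K2" for m
  proof -
    define A B where "A = dn a (Suc m)" and "B = dn b (Suc m)"
    have cont: "continuous_on {0..1} A" "continuous_on {0..1} B"
      unfolding A_def B_def using continuous_on_dn sa sb by auto
    have "integral {0..1} (\<lambda>x. (dn (\<lambda>x. a x - b x) (Suc m) x)^2) = integral {0..1} (\<lambda>x. (A x - B x)^2)"
      unfolding A_def B_def by (rule integral_cong) (simp add: dn_diff[OF sa sb])
    also have "\<dots> \<le> integral {0..1} (\<lambda>x. 2 * (A x)^2 + 2 * (B x)^2)"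
      using sq by (intro integral_le integrable_continuous_real continuous_intros cont) auto
    also have "\<dots> = 2 * integral {0..1} (\<lambda>x. (A x)^2) + 2 * integral {0..1} (\<lambda>x. (B x)^2)"
      by (subst integral_add) (auto intro!: integrable_continuous_real continuous_intros cont)
    finally have "weight \<sigma> m * integral {0..1} (\<lambda>x. (dn (\<lambda>x. a x - b x) (Suc m) x)^2) \<le>
        weight \<sigma> m * (2 * integral {0..1} (\<lambda>x. (A x)^2) + 2 * integral {0..1} (\<lambda>x. (B x)^2))"
      using wm[of m] by (intro mult_left_mono) auto
    moreover have "weight \<sigma> m * integral {0..1} (\<lambda>x. (A x)^2) \<le> K1"
      "weight \<sigma> m * integral {0..1} (\<lambda>x. (B x)^2) \<le> K2"
      using a b unfolding Xbounded_def A_def B_def by auto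
    ultimately show ?thesis by (simp add: algebra_simps)
  qed
  have bdry: "\<sigma> * weight \<sigma> m * (dn (\<lambda>x. a x - b x) (Suc m) 0)^2 \<le> 2 * K1 + 2 * K2" for m
  proof -
    have pt: "(dn (\<lambda>x. a x - b x) (Suc m) 0)^2 \<le> 2 * (dn a (Suc m) 0)^2 + 2 * (dn b (Suc m) 0)^2"
      using sq by (simp add: dn_diff[OF sa sb])
    have "\<sigma> * weight \<sigma> m * (dn (\<lambda>x. a x - b x) (Suc m) 0)^2 \<le>
        2 * (\<sigma> * weight \<sigma> m * (dn a (Suc m) 0)^2) + 2 * (\<sigma> * weight \<sigma> m * (dn b (Suc m) 0)^2)"
      using wm[of m] \<sigma> mult_left_mono[OF pt, of "\<sigma> * weight \<sigma> m"] by (simp add: algebra_simps)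
    moreover have "\<sigma> * weight \<sigma> m * (dn a (Suc m) 0)^2 \<le> K1" "\<sigma> * weight \<sigma> m * (dn b (Suc m) 0)^2 \<le> K2"
      using a b unfolding Xbounded_def by auto
    ultimately show ?thesis by linarith
  qed
  show ?thesis
    unfolding Xbounded_def using smooth01_diff[OF sa sb] a b L2 bdry by (simp add: Xbounded_def)
qed

section \<open>Convergence in \<open>Y\<^sup>\<sigma>\<close>\<close>

lemma uniform_limit_sum:
  fixes f :: "'i \<Rightarrow> 'a \<Rightarrow> 'b \<Rightarrow> 'c::real_normed_vector"
  assumes "finite I" and "\<And>i. i \<in> I \<Longrightarrow> uniform_limit S (f i) (l i) F"
  shows "uniform_limit S (\<lambda>n x. \<Sum>i\<in>I. f i n x) (\<lambda>x. \<Sum>i\<in>I. l i x) F"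
  using assms by (induction I rule: finite_induct) (auto intro: uniform_limit_add uniform_limit_const)

lemma uniform_limit_leibniz_zero:
  fixes F :: "nat \<Rightarrow> real \<Rightarrow> real"
  assumes F: "\<And>j x. x \<in> {0..1} \<Longrightarrow> \<bar>F j x\<bar> \<le> Fb j"
    and G: "\<And>m. uniform_limit {0..1} (\<lambda>k. G k m) (\<lambda>x. 0) sequentially"
  shows "uniform_limit {0..1} (\<lambda>k. leibniz F (G k) n) (\<lambda>x. 0) sequentially"
proof -
  have "uniform_limit {0..1} (\<lambda>k x. real (n choose i) * F i x * G k (n - i) x) (\<lambda>x. 0) sequentially" for i
  proof -
    have "bounded ((\<lambda>x. real (n choose i) * F i x) ` {0..1})"
      by (rule boundedI[where B = "real (n choose i) * Fb i"]) (auto simp: abs_mult intro!: mult_left_mono F)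
    moreover have "bounded ((\<lambda>x. 0::real) ` {0..1::real})" unfolding bounded_iff by auto
    ultimately show ?thesis
      using uniform_lim_mult[OF uniform_limit_const[where c = "\<lambda>x. real (n choose i) * F i x"] G[of "n - i"]]
      by (simp add: mult.assoc)
  qed
  then have "uniform_limit {0..1} (\<lambda>k x. \<Sum>i = 0..n. real (n choose i) * F i x * G k (n - i) x)
      (\<lambda>x. \<Sum>i = 0..n. 0) sequentially"
    by (intro uniform_limit_sum) auto
  then show ?thesis unfolding leibniz_def[abs_def] by simp
qed

lemma Ysummand_mult_tendsto_zero:
  assumes \<sigma>: "\<sigma> > 0" and f: "smooth01 f" and Fb: "\<And>j x. x \<in> {0..1} \<Longrightarrow> \<bar>dn f j x\<bar> \<le> Fb j"
    and w: "\<And>k. smooth01 (w k)"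
    and w_lim: "\<And>m. uniform_limit {0..1} (\<lambda>k. dn (w k) m) (\<lambda>x. 0) sequentially"
  shows "(\<lambda>k. Ysummand \<sigma> (\<lambda>x. f x * w k x) n) \<longlonglongrightarrow> 0"
proof -
  define h where "h k = dn (\<lambda>x. f x * w k x) n" for k
  have h_cont: "continuous_on {0..1} (h k)" for k
    unfolding h_def using continuous_on_dn[OF smooth01_mult[OF f w]] .
  have "uniform_limit {0..1} (\<lambda>k. leibniz (dn f) (dn (w k)) n) (\<lambda>x. 0) sequentially"
    using uniform_limit_leibniz_zero[OF Fb w_lim] .
  moreover have "uniform_limit {0..1} h (\<lambda>x. 0) sequentially \<longleftrightarrow>
      uniform_limit {0..1} (\<lambda>k. leibniz (dn f) (dn (w k)) n) (\<lambda>x. 0) sequentially"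
    unfolding h_def by (rule uniform_limit_cong') (simp_all add: dn_mult[OF f w])
  ultimately have h_lim: "uniform_limit {0..1} h (\<lambda>x. 0) sequentially" by simp
  define Q where "Q k = integral {0..1} (\<lambda>x. (h k x)^2) + (h k 0)^2" for k
  have "Q \<longlonglongrightarrow> integral {0..1} (\<lambda>x::real. (0::real)^2) + 0^2"
    unfolding Q_def
    by (intro tendsto_add tendsto_power tendsto_integral_sq_uniform_limit[OF h_lim h_cont]
        tendsto_uniform_limitI[OF h_lim]) auto
  then have upper_lim: "(\<lambda>k. (1 + real n / \<sigma> + \<sigma>) * weight \<sigma> n * Q k) \<longlonglongrightarrow> 0"
    by (simp add: tendsto_mult_right_zero)
  have upper: "Ysummand \<sigma> (\<lambda>x. f x * w k x) n \<le> (1 + real n / \<sigma> + \<sigma>) * weight \<sigma> n * Q k" for k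
  proof (rule Ysummand_le[OF \<sigma> smooth01_mult[OF f w]])
    have "0 \<le> integral {0..1} (\<lambda>x. (h k x)^2)"
      by (intro integral_nonneg integrable_continuous_real continuous_intros h_cont) auto
    then show "integral {0..1} (\<lambda>x. (dn (\<lambda>x. f x * w k x) n x)^2) \<le> Q k"
      "(dn (\<lambda>x. f x * w k x) n 0)^2 \<le> Q k"
      unfolding Q_def h_def by simp_all
  qed
  show ?thesis
    by (rule real_tendsto_sandwich[OF _ _ tendsto_const upper_lim])
      (simp_all add: always_eventually upper Ysummand_nonneg[OF \<sigma> smooth01_mult[OF f w]])
qed

lemma Ynorm_mult_tendsto_zero:
  assumes \<sigma>: "0 < \<sigma>" and \<sigma>\<sigma>': "\<sigma> < \<sigma>'" and f: "smooth01 f"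
    and Fb: "\<And>j x. x \<in> {0..1} \<Longrightarrow> \<bar>dn f j x\<bar> \<le> C * (fact j)^2 / \<sigma>'^j"
    and w: "\<And>j. Xbounded \<sigma> K (w j)"
    and w_lim: "\<And>m. uniform_limit {0..1} (\<lambda>j. dn (w j) m) (\<lambda>x. 0) sequentially"
  shows "(\<lambda>j. Ynorm \<sigma> (\<lambda>x. f x * w j x)) \<longlonglongrightarrow> 0"
proof -
  have K: "0 \<le> K" using Xbounded_nonneg[OF \<sigma> w] .
  have sw: "smooth01 (w j)" for j using w unfolding Xbounded_def by blast
  define M where "M = product_majorant \<sigma> (\<lambda>j. C * (fact j)^2 / \<sigma>'^j) K"
  have "(\<lambda>j. \<Sum>n. Ysummand \<sigma> (\<lambda>x. f x * w j x) n) \<longlonglongrightarrow> (\<Sum>n. 0)"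
  proof (rule tannerys_theorem[THEN conjunct2, THEN conjunct2])
    show "(\<lambda>j. Ysummand \<sigma> (\<lambda>x. f x * w j x) n) \<longlonglongrightarrow> 0" for n
      by (rule Ysummand_mult_tendsto_zero[OF \<sigma> f Fb sw w_lim])
    show "summable M"
      unfolding M_def by (rule summable_product_majorant[OF \<sigma> \<sigma>\<sigma>' K])
    show "\<forall>\<^sub>F (n, j) in at_top \<times>\<^sub>F sequentially. norm (Ysummand \<sigma> (\<lambda>x. f x * w j x) n) \<le> M n"
      unfolding M_def
      using Ysummand_mult_le[OF \<sigma> f Fb w] Ysummand_nonneg[OF \<sigma> smooth01_mult[OF f sw]]
      by (intro always_eventually) auto
  qed simp
  then have "(\<lambda>j. sqrt (\<Sum>n. Ysummand \<sigma> (\<lambda>x. f x * w j x) n)) \<longlonglongrightarrow> 0"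
    using tendsto_real_sqrt by fastforce
  then show ?thesis
    using Ynorm_eq_Ysummand[OF Xbounded_mult_Yspace[OF \<sigma> \<sigma>\<sigma>' f Fb w]] by simp
qed

lemma Xbounded_mult_convergent_subseq:
  fixes u :: "nat \<Rightarrow> real \<Rightarrow> real"
  assumes \<sigma>: "0 < \<sigma>" and \<sigma>\<sigma>': "\<sigma> < \<sigma>'" and f: "smooth01 f"
    and Fb: "\<And>j x. x \<in> {0..1} \<Longrightarrow> \<bar>dn f j x\<bar> \<le> C * (fact j)^2 / \<sigma>'^j"
    and u: "\<And>n. Xbounded \<sigma> K (u n)"
  shows "\<exists>r v. strict_mono r \<and> v \<in> Yspace \<sigma> \<and> (\<lambda>j. Ynorm \<sigma> (\<lambda>x. f x * u (r j) x - v x)) \<longlonglongrightarrow> 0"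
proof -
  have su: "smooth01 (u n)" for n using u unfolding Xbounded_def by blast
  obtain k G where k: "strict_mono k"
    and G: "\<And>m. uniform_limit {0..1} (\<lambda>n. dn (u (k n)) m) (G m) sequentially"
    using Xbounded_diagonal_subseq[where u = u, OF \<sigma> u] by blast
  define U where "U = G 0"
  have U: "Xbounded \<sigma> K U" unfolding U_def using Xbounded_uniform_limit[OF \<sigma> u G] .
  have sU: "smooth01 U" using U unfolding Xbounded_def by blast
  have dn_U: "dn U m x = G m x" if "x \<in> {0..1}" for m x
    unfolding U_def using dn_eq_deriv_seq[OF is_deriv_seq_uniform_limit[OF su G] that] .
  define w where "w j = (\<lambda>x. u (k j) x - U x)" for j
  have w: "Xbounded \<sigma> (4 * K) (w j)" for j
    unfolding w_def using Xbounded_diff[OF u U \<sigma>] by simp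
  have w_lim: "uniform_limit {0..1} (\<lambda>j. dn (w j) m) (\<lambda>x. 0) sequentially" for m
  proof -
    have "uniform_limit {0..1} (\<lambda>j x. dn (u (k j)) m x - G m x) (\<lambda>x. G m x - G m x) sequentially"
      by (intro uniform_limit_minus G uniform_limit_const)
    moreover have "uniform_limit {0..1} (\<lambda>j x. dn (u (k j)) m x - G m x) (\<lambda>x. G m x - G m x) sequentially
        \<longleftrightarrow> uniform_limit {0..1} (\<lambda>j. dn (w j) m) (\<lambda>x. 0) sequentially"
      unfolding w_def by (rule uniform_limit_cong') (simp_all add: dn_diff[OF su sU] dn_U)
    ultimately show ?thesis by simp
  qed
  have "(\<lambda>j. Ynorm \<sigma> (\<lambda>x. f x * w j x)) \<longlonglongrightarrow> 0"
    by (rule Ynorm_mult_tendsto_zero[OF \<sigma> \<sigma>\<sigma>' f Fb w w_lim])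
  moreover have "(\<lambda>x. f x * u (k j) x - f x * U x) = (\<lambda>x. f x * w j x)" for j
    unfolding w_def by (simp add: right_diff_distrib)
  ultimately have "(\<lambda>j. Ynorm \<sigma> (\<lambda>x. f x * u (k j) x - f x * U x)) \<longlonglongrightarrow> 0" by simp
  with k Xbounded_mult_Yspace[OF \<sigma> \<sigma>\<sigma>' f Fb U] show ?thesis by blast
qed

theorem mainTheorem5:
  fixes \<sigma> \<sigma>' :: real and f :: "real \<Rightarrow> real"
  assumes "\<sigma> > 0" and "\<sigma>' > \<sigma>" and "gevrey \<sigma>' 2 f"
  shows "compact_XY \<sigma> (\<lambda>u x. f x * u x)"
proof -
  obtain C where f: "smooth01 f" and Fb: "\<And>n x. x \<in> {0..1} \<Longrightarrow> \<bar>dn f n x\<bar> \<le> C * (fact n)^2 / \<sigma>'^n"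
    using gevrey_dn_bound[OF assms(3)] assms(1,2) by auto
  have "(\<lambda>x. f x * u x) \<in> Yspace \<sigma>" if "u \<in> Xspace \<sigma>" for u
    using Xbounded_mult_Yspace[OF assms(1,2) f Fb Xspace_Xbounded(1)[OF assms(1) that]] .
  moreover have "\<exists>r v. strict_mono r \<and> v \<in> Yspace \<sigma> \<and> (\<lambda>j. Ynorm \<sigma> (\<lambda>x. f x * u (r j) x - v x)) \<longlonglongrightarrow> 0"
    if "\<forall>n. u n \<in> Xspace \<sigma> \<and> Xnorm \<sigma> (u n) \<le> B" for u :: "nat \<Rightarrow> real \<Rightarrow> real" and B
  proof (rule Xbounded_mult_convergent_subseq[OF assms(1,2) f Fb])
    show "Xbounded \<sigma> (B^2) (u n)" for n
      using Xspace_Xbounded[OF assms(1)] that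
      by (meson Xbounded_mono power_mono)
  qed
  ultimately show ?thesis unfolding compact_XY_def by blast
qed

end
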